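(* Let $\phi:X\to Y$ be a pure morphism of $\mathrm{Agg}^{\rm ctd}$, i.e. a composite of virtual edge and virtual loop contractions. Then $X$ may be identified with the total dissection $\mathrm{agg}(\mathbb{\Gamma}(\phi))$, $Y$ with the total contraction $\mathbb{\Gamma}(\phi)/\mathbb{\Gamma}(\phi)$, and $\phi$ with $\mathrm v_{\mathbb{\Gamma}(\phi)}=c_{\mathbb{\Gamma}(\phi)}\circ i_{\mathbb{\Gamma}(\phi)}$. Consequently any pure morphism of $\mathrm{Agg}^{\rm ctd}$ is uniquely determined by its ghost graph.
   Context: A graph $\Gamma=(F,V,\partial,\imath)$ consists of finite sets $F$ (flags) and $V$ (vertices), a map $\partial:F\to V$ and an involution $\imath$ of $F$. The two-element orbits of $\imath$ are the edges, the fixed points the outer flags. A graph morphism $\phi:\Gamma\to\Gamma'=(F',V',\partial',\imath')$ is a triple $(\phi_V,\phi^F,\imath_\phi)$ with $\phi_V:V\to V'$ surjective, $\phi^F:F'\to F$ injective and $\imath_\phi$ a fixed-point-free involution of $F\setminus\phi^F(F')$, such that: (i) $\phi_V\partial\phi^F=\partial'$ and $\phi_V\partial(f)=\phi_V\partial(\imath_\phi f)$ for $f\notin\phi^F(F')$; (ii) for $f\notin\phi^F(F')$, either $\{f,\imath f\}$ is an edge of $\Gamma$ and $\imath_\phi f=\imath f$, or $f$ and $\imath_\phi f$ are both outer flags of $\Gamma$; (iii) if $f'\in F'$ and $\phi^F(f')$ lies on an edge of $\Gamma$, then $\imath(\phi^F f')=\phi^F(\imath' f')$. Composition: $(\psi\phi)_V=\psi_V\phi_V$,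 $(\psi\phi)^F=\phi^F\psi^F$, $\imath_{\psi\phi}$ equals $\imath_\phi$ off $\phi^F(F')$ and $\phi^F\imath_\psi(\phi^F)^{-1}$ on $\phi^F(F'\setminus\psi^F(F''))$. The ghost graph of $\phi$ is $\mathbb{\Gamma}(\phi)=(F,V,\partial,\hat\imath_\phi)$, $\hat\imath_\phi$ extending $\imath_\phi$ by the identity on $\phi^F(F')$. A corolla $*_S$ has one vertex, flag set $S$, no edges; an aggregate is a graph with $\imath=\mathrm{id}$. The simple grafting of distinct outer flags $s,t$ is $(\mathrm{id},\mathrm{id},\emptyset)$ into the graph whose involution additionally exchanges $s,t$; the simple contraction $c_{\{s,t\}}$ of an edge is (quotient $V\to V/(\partial s\sim\partial t)$, inclusion $F\setminus\{s,t\}\hookrightarrow F$, $\imath_\phi(s)=t$). For distinct outer flags $s,t$ of an aggregate, the virtual edge contraction ${}_s\circ_t$ ($\partial s\ne\partial t$) resp. virtual loop contraction $\circ_{st}$ ($\partial s=\partial t$) is $c_{\{s,t\}}$ composed after the grafting of $s,t$. $\mathrm{Agg}^{\rm ctd}$ is the category of aggregates with morphisms generated by isomorphisms and virtual edge/loop contractions. For a graph $\Gamma$: the total dissection is $\mathrm{agg}(\Gamma)=(F,V,\partial,\mathrm{id})$; the total contraction $\Gamma/\Gamma$ is the aggregate whose vertices are the connected components of $\Gamma$ and whose flags are the outer flags of $\Gamma$, each attached to its component; $i_\Gamma:\mathrm{agg}(\Gamma)\to\Gamma$ is the composite of graftings of all edges, $c_\Gamma:\Gamma\to\Gamma/\Gamma$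 the composite of contractions of all edges, and $\mathrm v_\Gamma=c_\Gamma i_\Gamma$. *)

theory Defs
  imports Main
begin

text \<open>A graph is given by carrier sets of flags and vertices inside ambient types,
  together with the boundary map and the involution; only the values of the maps on
  the carriers are relevant.\<close>

record ('f, 'v) graph =
  flags :: "'f set"
  verts :: "'v set"
  bd    :: "'f \<Rightarrow> 'v"
  inv   :: "'f \<Rightarrow> 'f"

definition wf_graph :: "('f, 'v) graph \<Rightarrow> bool" where
  "wf_graph G \<longleftrightarrow> finite (flags G) \<and> finite (verts G)
     \<and> (\<forall>f\<in>flags G. bd G f \<in> verts G)
     \<and> (\<forall>f\<in>flags G. inv G f \<in> flags G \<and> inv G (inv G f) = f)"

definition graph_eq :: "('f, 'v) graph \<Rightarrow> ('f, 'v) graph \<Rightarrow> bool" where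
  "graph_eq G H \<longleftrightarrow> flags G = flags H \<and> verts G = verts H
     \<and> (\<forall>f\<in>flags G. bd G f = bd H f \<and> inv G f = inv H f)"

definition aggregate :: "('f, 'v) graph \<Rightarrow> bool" where
  "aggregate G \<longleftrightarrow> wf_graph G \<and> (\<forall>f\<in>flags G. inv G f = f)"

text \<open>A morphism \<open>\<Gamma> \<rightarrow> \<Gamma>'\<close> is a triple \<open>(\<phi>_V, \<phi>^F, \<iota>_\<phi>)\<close>; \<open>\<phi>^F\<close> goes
  contravariantly from the flags of \<open>\<Gamma>'\<close> to those of \<open>\<Gamma>\<close>.\<close>

record ('v, 'w, 'f, 'g) morph =
  mV :: "'v \<Rightarrow> 'w"
  mF :: "'g \<Rightarrow> 'f"
  mi :: "'f \<Rightarrow> 'f"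

definition is_morph :: "('f, 'v) graph \<Rightarrow> ('g, 'w) graph \<Rightarrow> ('v, 'w, 'f, 'g) morph \<Rightarrow> bool" where
  "is_morph X Y \<phi> \<longleftrightarrow> wf_graph X \<and> wf_graph Y
     \<and> mV \<phi> ` verts X = verts Y
     \<and> mF \<phi> ` flags Y \<subseteq> flags X \<and> inj_on (mF \<phi>) (flags Y)
     \<and> (\<forall>f \<in> flags X - mF \<phi> ` flags Y.
           mi \<phi> f \<in> flags X - mF \<phi> ` flags Y \<and> mi \<phi> f \<noteq> f \<and> mi \<phi> (mi \<phi> f) = f)
     \<and> (\<forall>f'\<in>flags Y. mV \<phi> (bd X (mF \<phi> f')) = bd Y f')
     \<and> (\<forall>f \<in> flags X - mF \<phi> ` flags Y. mV \<phi> (bd X f) = mV \<phi> (bd X (mi \<phi> f)))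
     \<and> (\<forall>f \<in> flags X - mF \<phi> ` flags Y.
           (inv X f \<noteq> f \<and> mi \<phi> f = inv X f) \<or> (inv X f = f \<and> inv X (mi \<phi> f) = mi \<phi> f))
     \<and> (\<forall>f'\<in>flags Y. inv X (mF \<phi> f') \<noteq> mF \<phi> f' \<longrightarrow> inv X (mF \<phi> f') = mF \<phi> (inv Y f'))"

definition morph_eq :: "('f, 'v) graph \<Rightarrow> ('g, 'w) graph
     \<Rightarrow> ('v, 'w, 'f, 'g) morph \<Rightarrow> ('v, 'w, 'f, 'g) morph \<Rightarrow> bool" where
  "morph_eq X Y \<phi> \<psi> \<longleftrightarrow> (\<forall>v\<in>verts X. mV \<phi> v = mV \<psi> v)
     \<and> (\<forall>f\<in>flags Y. mF \<phi> f = mF \<psi> f)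
     \<and> (\<forall>f\<in>flags X - mF \<phi> ` flags Y. mi \<phi> f = mi \<psi> f)"

text \<open>Composition \<open>\<psi> \<circ> \<phi>\<close> for \<open>\<phi> : X \<rightarrow> Y\<close>, \<open>\<psi> : Y \<rightarrow> Z\<close>; the first argument is the
  flag set of the middle graph \<open>Y\<close>.\<close>
definition mcomp :: "'g set \<Rightarrow> ('w, 'u, 'g, 'h) morph \<Rightarrow> ('v, 'w, 'f, 'g) morph
     \<Rightarrow> ('v, 'u, 'f, 'h) morph" where
  "mcomp FY \<psi> \<phi> = \<lparr> mV = mV \<psi> \<circ> mV \<phi>, mF = mF \<phi> \<circ> mF \<psi>,
     mi = (\<lambda>f. if f \<in> mF \<phi> ` FY then mF \<phi> (mi \<psi> (inv_into FY (mF \<phi>) f)) else mi \<phi> f) \<rparr>"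

definition id_morph :: "('v, 'v, 'f, 'f) morph" where
  "id_morph = \<lparr> mV = id, mF = id, mi = id \<rparr>"

definition is_iso :: "('f, 'v) graph \<Rightarrow> ('g, 'w) graph \<Rightarrow> ('v, 'w, 'f, 'g) morph \<Rightarrow> bool" where
  "is_iso X Y \<phi> \<longleftrightarrow> is_morph X Y \<phi>
     \<and> bij_betw (mV \<phi>) (verts X) (verts Y) \<and> bij_betw (mF \<phi>) (flags Y) (flags X)"

definition ghost :: "('f, 'v) graph \<Rightarrow> ('g, 'w) graph \<Rightarrow> ('v, 'w, 'f, 'g) morph \<Rightarrow> ('f, 'v) graph" where
  "ghost X Y \<phi> = \<lparr> flags = flags X, verts = verts X, bd = bd X,
      inv = (\<lambda>f. if f \<in> mF \<phi> ` flags Y then f else mi \<phi> f) \<rparr>"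

text \<open>The virtual (edge or loop) contraction of two distinct outer flags \<open>s, t\<close> of an
  aggregate \<open>X\<close>: the composite of the grafting of \<open>s,t\<close> and the simple contraction of the
  resulting edge. This is the morphism \<open>(q, F - {s,t} \<hookrightarrow> F, s \<leftrightarrow> t)\<close> where \<open>q\<close> is the
  quotient map \<open>V \<rightarrow> V/(\<partial>s \<sim> \<partial>t)\<close>. Since the target vertex set lives in a fixed type,
  the quotient is given by any realisation \<open>q\<close> of it (i.e. determined up to the
  unique vertex bijection).\<close>
definition virt_contr :: "('f, 'v) graph \<Rightarrow> ('f, 'v) graph \<Rightarrow> ('v, 'v, 'f, 'f) morph
     \<Rightarrow> 'f \<Rightarrow> 'f \<Rightarrow> bool" where
  "virt_contr X Y \<phi> s t \<longleftrightarrow> aggregate X \<and> aggregate Y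
     \<and> s \<in> flags X \<and> t \<in> flags X \<and> s \<noteq> t
     \<and> flags Y = flags X - {s, t}
     \<and> mV \<phi> ` verts X = verts Y
     \<and> (\<forall>x\<in>verts X. \<forall>y\<in>verts X. mV \<phi> x = mV \<phi> y \<longleftrightarrow>
           x = y \<or> {x, y} = {bd X s, bd X t})
     \<and> (\<forall>f\<in>flags Y. bd Y f = mV \<phi> (bd X f))
     \<and> (\<forall>f\<in>flags Y. mF \<phi> f = f)
     \<and> mi \<phi> s = t \<and> mi \<phi> t = s"

inductive pure :: "('f, 'v) graph \<Rightarrow> ('f, 'v) graph \<Rightarrow> ('v, 'v, 'f, 'f) morph \<Rightarrow> bool" where
  pure_id: "aggregate X \<Longrightarrow> pure X X id_morph"
| pure_step: "virt_contr X Y \<phi> s t \<Longrightarrow> pure Y Z \<psi> \<Longrightarrow> pure X Z (mcomp (flags Y) \<psi> \<phi>)"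

definition agg :: "('f, 'v) graph \<Rightarrow> ('f, 'v) graph" where
  "agg G = \<lparr> flags = flags G, verts = verts G, bd = bd G, inv = id \<rparr>"

definition adj :: "('f, 'v) graph \<Rightarrow> ('v \<times> 'v) set" where
  "adj G = {(bd G f, bd G (inv G f)) | f. f \<in> flags G}"

definition component :: "('f, 'v) graph \<Rightarrow> 'v \<Rightarrow> 'v set" where
  "component G v = {w \<in> verts G. (v, w) \<in> (adj G)\<^sup>*}"

definition tot_contr :: "('f, 'v) graph \<Rightarrow> ('f, 'v set) graph" where
  "tot_contr G = \<lparr> flags = {f \<in> flags G. inv G f = f},
      verts = component G ` verts G,
      bd = (\<lambda>f. component G (bd G f)), inv = id \<rparr>"

text \<open>\<open>i_\<Gamma> : agg(\<Gamma>) \<rightarrow> \<Gamma>\<close>, the composite of graftings of all edges, is \<open>(id, id, \<emptyset>)\<close>.\<close>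
definition i_morph :: "('f, 'v) graph \<Rightarrow> ('v, 'v, 'f, 'f) morph" where
  "i_morph G = \<lparr> mV = id, mF = id, mi = id \<rparr>"

text \<open>\<open>c_\<Gamma> : \<Gamma> \<rightarrow> \<Gamma>/\<Gamma>\<close>, the composite of contractions of all edges: vertices go to
  their components, outer flags include into all flags, and \<open>\<iota>_c = \<iota>\<close> on edge flags.\<close>
definition c_morph :: "('f, 'v) graph \<Rightarrow> ('v, 'v set, 'f, 'f) morph" where
  "c_morph G = \<lparr> mV = component G, mF = id, mi = inv G \<rparr>"

definition v_morph :: "('f, 'v) graph \<Rightarrow> ('v, 'v set, 'f, 'f) morph" where
  "v_morph G = mcomp (flags G) (c_morph G) (i_morph G)"

end

theory Submission
  imports Defs
begin

text \<open>A pure morphism keeps the surviving flags fixed and pairs the removed flags by a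
  fixed-point-free involution, so its ghost graph is a graph whose outer flags are the flags
  of the target. Each virtual contraction identifies exactly the two endpoints of one new
  ghost edge; by induction, the vertex map of a pure morphism identifies two vertices iff
  they are joined by a path in the ghost graph. Hence the vertex map is the projection onto
  the connected components of the ghost graph followed by a bijection, which is the
  factorisation through the total contraction; and two pure morphisms with the same ghost
  graph have the same removed flags, the same pairing and the same vertex kernel, so they
  differ by an isomorphism of their targets.\<close>

lemma rtrancl_map_prod_identify_pair:
  assumes ker: "\<forall>x\<in>A. \<forall>y\<in>A. q x = q y \<longleftrightarrow> x = y \<or> {x, y} = {a, b}"
    and ab: "a \<in> A" "b \<in> A" and SA: "S \<subseteq> A \<times> A" and xy: "x \<in> A" "y \<in> A"
  shows "(q x, q y) \<in> (map_prod q q ` S)\<^sup>* \<longleftrightarrow> (x, y) \<in> (S \<union> {(a, b), (b, a)})\<^sup>*"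
proof
  let ?U = "S \<union> {(a, b), (b, a)}"
  have fiber: "(u, v) \<in> ?U\<^sup>*" if "u \<in> A" "v \<in> A" "q u = q v" for u v
  proof -
    from ker that have "u = v \<or> (u, v) \<in> ?U"
      by (auto simp: doubleton_eq_iff)
    then show ?thesis by (metis r_into_rtrancl rtrancl.rtrancl_refl)
  qed
  have "\<forall>z\<in>A. q z = w \<longrightarrow> (x, z) \<in> ?U\<^sup>*" if "(q x, w) \<in> (map_prod q q ` S)\<^sup>*" for w
    using that
  proof (induction rule: rtrancl_induct)
    case base
    show ?case using fiber[OF xy(1)] by (metis (full_types))
  next
    case (step w w')
    from step.hyps(2) obtain u u' where uu: "(u, u') \<in> S" "w = q u" "w' = q u'" by auto
    from uu(1) SA have uA: "u \<in> A" "u' \<in> A" by auto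
    with uu(2) step.IH have "(x, u) \<in> ?U\<^sup>*" by blast
    then have "(x, u') \<in> ?U\<^sup>*" using uu(1) by (simp add: rtrancl_into_rtrancl)
    moreover have "(u', z) \<in> ?U\<^sup>*" if "z \<in> A" "q z = w'" for z
      using fiber[OF uA(2) that(1)] that(2) uu(3) by simp
    ultimately show ?case by (blast intro: rtrancl_trans)
  qed
  then show "(q x, q y) \<in> (map_prod q q ` S)\<^sup>* \<Longrightarrow> (x, y) \<in> ?U\<^sup>*" using xy by blast
next
  have qab: "q a = q b" using ker ab by blast
  assume "(x, y) \<in> (S \<union> {(a, b), (b, a)})\<^sup>*"
  then show "(q x, q y) \<in> (map_prod q q ` S)\<^sup>*"
  proof (induction rule: rtrancl_induct)
    case (step u u')
    then consider "(u, u') \<in> S" | "q u = q u'" using qab by auto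
    then show ?case
    proof cases
      case 1
      then have "(q u, q u') \<in> map_prod q q ` S" by force
      with step.IH show ?thesis by (rule rtrancl_into_rtrancl)
    next
      case 2
      with step.IH show ?thesis by simp
    qed
  qed simp
qed

definition induced_map :: "('a \<Rightarrow> 'b) \<Rightarrow> 'a set \<Rightarrow> ('a \<Rightarrow> 'c) \<Rightarrow> 'b \<Rightarrow> 'c" where
  "induced_map q A q' y = q' (SOME x. x \<in> A \<and> q x = y)"

lemma induced_map_apply:
  assumes ker: "\<forall>x\<in>A. \<forall>y\<in>A. q x = q y \<longleftrightarrow> q' x = q' y" and x: "x \<in> A"
  shows "induced_map q A q' (q x) = q' x"
proof -
  let ?z = "SOME z. z \<in> A \<and> q z = q x"
  have "?z \<in> A \<and> q ?z = q x"
    by (rule someI[of _ x]) (simp add: x)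
  then have "q' ?z = q' x" using ker[rule_format, of ?z x] x by blast
  then show ?thesis by (simp add: induced_map_def)
qed

lemma bij_betw_induced_map:
  assumes ker: "\<forall>x\<in>A. \<forall>y\<in>A. q x = q y \<longleftrightarrow> q' x = q' y"
  shows "bij_betw (induced_map q A q') (q ` A) (q' ` A)"
  unfolding bij_betw_def
proof
  show "inj_on (induced_map q A q') (q ` A)"
  proof (rule inj_onI)
    fix a b assume "a \<in> q ` A" "b \<in> q ` A" and eq: "induced_map q A q' a = induced_map q A q' b"
    then obtain x y where "x \<in> A" "y \<in> A" "a = q x" "b = q y" by blast
    with eq ker show "a = b" by (simp add: induced_map_apply[OF ker])
  qed
  show "induced_map q A q' ` q ` A = q' ` A"
    unfolding image_image using induced_map_apply[OF ker] by (rule image_cong[OF refl])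
qed

lemma aggregate_iso_of_vertex_bij:
  assumes "aggregate A" "aggregate B" "flags B = flags A"
    and "bij_betw g (verts A) (verts B)" and "\<forall>f\<in>flags A. g (bd A f) = bd B f"
  shows "is_iso A B \<lparr>mV = g, mF = id, mi = id\<rparr>"
  using assms by (auto simp: is_iso_def is_morph_def aggregate_def bij_betw_def)

lemma aggregate_bd_in_verts:
  assumes "aggregate G" and "f \<in> flags G"
  shows "bd G f \<in> verts G"
  using assms by (simp add: aggregate_def wf_graph_def)

lemma aggregate_tot_contr:
  assumes "wf_graph G"
  shows "aggregate (tot_contr G)"
  using assms by (auto simp: aggregate_def wf_graph_def tot_contr_def)

lemma adj_eq_image: "adj G = (\<lambda>f. (bd G f, bd G (inv G f))) ` flags G"
  by (simp add: adj_def setcompr_eq_image)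

lemma adj_cong:
  assumes "wf_graph G" and "graph_eq G H"
  shows "adj G = adj H"
proof -
  have "(bd G f, bd G (inv G f)) = (bd H f, bd H (inv H f))" if "f \<in> flags G" for f
    using assms that by (auto simp: wf_graph_def graph_eq_def)
  moreover have "flags G = flags H" using assms(2) by (simp add: graph_eq_def)
  ultimately show ?thesis unfolding adj_eq_image by (auto intro: image_cong)
qed

lemma v_morph_simps:
  "mV (v_morph G) = component G"
  "mF (v_morph G) = id"
  "mi (v_morph G) f = (if f \<in> flags G then inv G f else f)"
  by (auto simp: v_morph_def mcomp_def c_morph_def i_morph_def inv_into_f_eq)

lemma mi_mcomp_of_mF_id:
  assumes "\<forall>g\<in>FY. mF \<phi> g = g"
  shows "mi (mcomp FY \<psi> \<phi>) f = (if f \<in> FY then mF \<phi> (mi \<psi> f) else mi \<phi> f)"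
proof -
  have "mF \<phi> ` FY = FY" and "inj_on (mF \<phi>) FY"
    using assms by (auto simp: inj_on_def)
  then show ?thesis using assms by (auto simp: mcomp_def inv_into_f_eq)
qed

lemma morph_eq_mcomp_vertex_map:
  assumes "\<forall>v\<in>verts X. g (mV \<theta> v) = mV \<phi> v" and "flags Y = FM"
    and "\<forall>f\<in>FM. mF \<theta> f = f" and "\<forall>f\<in>flags Y. mF \<phi> f = f"
    and "\<forall>f\<in>flags X - FM. mi \<theta> f = mi \<phi> f"
  shows "morph_eq X Y \<phi> (mcomp FM \<lparr>mV = g, mF = id, mi = id\<rparr> \<theta>)"
proof -
  have "mF \<theta> ` FM = FM" and "mF \<phi> ` flags Y = flags Y"
    using assms(3,4) by force+
  then show ?thesis using assms by (auto simp: morph_eq_def mcomp_def)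
qed

lemma ghost_simps [simp]:
  "flags (ghost X Y \<phi>) = flags X" "verts (ghost X Y \<phi>) = verts X" "bd (ghost X Y \<phi>) = bd X"
  by (simp_all add: ghost_def)

lemma pure_aggregate:
  assumes "pure X Y \<phi>"
  shows "aggregate X" "aggregate Y"
  using assms by (induction rule: pure.induct) (auto simp: virt_contr_def)

lemma pure_flags:
  assumes "pure X Y \<phi>"
  shows "flags Y \<subseteq> flags X \<and> (\<forall>f\<in>flags Y. mF \<phi> f = f)"
  using assms by (induction rule: pure.induct) (auto simp: virt_contr_def id_morph_def mcomp_def)

lemma pure_mF_image:
  assumes "pure X Y \<phi>"
  shows "mF \<phi> ` flags Y = flags Y"
  using pure_flags[OF assms] by force

lemma pure_mi:
  assumes "pure X Y \<phi>" and "f \<in> flags X - flags Y"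
  shows "mi \<phi> f \<in> flags X - flags Y \<and> mi \<phi> f \<noteq> f \<and> mi \<phi> (mi \<phi> f) = f"
  using assms
proof (induction arbitrary: f rule: pure.induct)
  case (pure_id X)
  then show ?case by simp
next
  case (pure_step X Y \<phi> s t Z \<psi>)
  let ?\<theta> = "mcomp (flags Y) \<psi> \<phi>"
  have ZY: "flags Z \<subseteq> flags Y" using pure_flags[OF pure_step.hyps(2)] by blast
  have Y: "flags X = insert s (insert t (flags Y))" "s \<notin> flags Y" "t \<notin> flags Y" "s \<noteq> t"
    and st: "mi \<phi> s = t" "mi \<phi> t = s" and mF: "\<forall>g\<in>flags Y. mF \<phi> g = g"
    using pure_step.hyps(1) by (auto simp: virt_contr_def)
  have mi\<theta>: "mi ?\<theta> g = (if g \<in> flags Y then mi \<psi> g else mi \<phi> g)" if "g \<in> flags X - flags Z" for g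
    using pure_step.IH[of g] mF that by (auto simp: mi_mcomp_of_mF_id[OF mF])
  have st\<theta>: "mi ?\<theta> s = t" "mi ?\<theta> t = s" using mi\<theta>[of s] mi\<theta>[of t] st Y ZY by auto
  from pure_step.prems consider "f \<in> {s, t}" | "f \<in> flags Y - flags Z" using Y by blast
  then show ?case
  proof cases
    case 1
    then show ?thesis using st\<theta> Y ZY by auto
  next
    case 2
    then show ?thesis using mi\<theta> pure_step.IH[OF 2] Y by auto
  qed
qed

lemma pure_bd:
  assumes "pure X Y \<phi>" and "f \<in> flags Y"
  shows "bd Y f = mV \<phi> (bd X f)"
  using assms
proof (induction rule: pure.induct)
  case (pure_step X Y \<phi> s t Z \<psi>)
  have "f \<in> flags Y" using pure_flags[OF pure_step.hyps(2)] pure_step.prems by blast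
  then show ?case using pure_step by (simp add: virt_contr_def mcomp_def)
qed (simp add: id_morph_def)

lemma pure_verts:
  assumes "pure X Y \<phi>"
  shows "mV \<phi> ` verts X = verts Y"
  using assms
proof (induction rule: pure.induct)
  case (pure_step X Y \<phi> s t Z \<psi>)
  have "mV (mcomp (flags Y) \<psi> \<phi>) ` verts X = mV \<psi> ` mV \<phi> ` verts X"
    by (simp add: mcomp_def image_comp)
  then show ?case using pure_step by (simp add: virt_contr_def)
qed (simp add: id_morph_def)

lemma ghost_inv_pure:
  assumes "pure X Y \<phi>"
  shows "inv (ghost X Y \<phi>) f = (if f \<in> flags Y then f else mi \<phi> f)"
  using pure_mF_image[OF assms] by (simp add: ghost_def)

lemma ghost_inv_fixed_iff:
  assumes "pure X Y \<phi>" and "f \<in> flags X"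
  shows "inv (ghost X Y \<phi>) f = f \<longleftrightarrow> f \<in> flags Y"
  using assms pure_mi[OF assms(1)] by (auto simp: ghost_inv_pure)

lemma wf_graph_ghost:
  assumes "pure X Y \<phi>"
  shows "wf_graph (ghost X Y \<phi>)"
proof -
  have "wf_graph X" using pure_aggregate(1)[OF assms] by (simp add: aggregate_def)
  then show ?thesis
    using pure_flags[OF assms] pure_mi[OF assms]
    by (auto simp: wf_graph_def ghost_inv_pure[OF assms])
qed

lemma adj_ghost_virt_contr:
  assumes vc: "virt_contr X Y \<phi> s t" and P: "pure Y Z \<psi>"
  defines "S \<equiv> (\<lambda>f. (bd X f, bd X (inv (ghost Y Z \<psi>) f))) ` flags Y"
  shows "adj (ghost Y Z \<psi>) = map_prod (mV \<phi>) (mV \<phi>) ` S"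
    and "adj (ghost X Z (mcomp (flags Y) \<psi> \<phi>)) = S \<union> {(bd X s, bd X t), (bd X t, bd X s)}"
proof -
  have Y: "flags X = insert s (insert t (flags Y))"
    and st: "mi \<phi> s = t" "mi \<phi> t = s" "s \<notin> flags Y" "t \<notin> flags Y"
    and mF: "\<forall>g\<in>flags Y. mF \<phi> g = g"
    and bdY: "\<forall>g\<in>flags Y. bd Y g = mV \<phi> (bd X g)"
    using vc by (auto simp: virt_contr_def)
  have inv_in: "inv (ghost Y Z \<psi>) f \<in> flags Y" if "f \<in> flags Y" for f
    using wf_graph_ghost[OF P] that by (simp add: wf_graph_def)
  have "adj (ghost Y Z \<psi>) = (\<lambda>f. (bd Y f, bd Y (inv (ghost Y Z \<psi>) f))) ` flags Y"
    by (simp add: adj_eq_image)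
  also have "\<dots> = map_prod (mV \<phi>) (mV \<phi>) ` S"
    unfolding S_def image_image using bdY inv_in by (intro image_cong) auto
  finally show "adj (ghost Y Z \<psi>) = map_prod (mV \<phi>) (mV \<phi>) ` S" .
  let ?\<theta> = "mcomp (flags Y) \<psi> \<phi>"
  have P\<theta>: "pure X Z ?\<theta>" by (rule pure.pure_step[OF vc P])
  have ZY: "flags Z \<subseteq> flags Y" using pure_flags[OF P] by blast
  have "inv (ghost X Z ?\<theta>) f = inv (ghost Y Z \<psi>) f" if "f \<in> flags Y" for f
    using that ZY mF inv_in[OF that]
    by (auto simp: ghost_inv_pure[OF P\<theta>] ghost_inv_pure[OF P] mi_mcomp_of_mF_id[OF mF])
  then have "(\<lambda>f. (bd X f, bd X (inv (ghost X Z ?\<theta>) f))) ` flags Y = S"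
    unfolding S_def by (intro image_cong) auto
  moreover have "inv (ghost X Z ?\<theta>) s = t" "inv (ghost X Z ?\<theta>) t = s"
    using st ZY by (auto simp: ghost_inv_pure[OF P\<theta>] mi_mcomp_of_mF_id[OF mF])
  ultimately show "adj (ghost X Z ?\<theta>) = S \<union> {(bd X s, bd X t), (bd X t, bd X s)}"
    by (auto simp: adj_eq_image Y)
qed

lemma pure_mV_eq_iff_rtrancl_adj:
  assumes "pure X Y \<phi>" and "x \<in> verts X" and "y \<in> verts X"
  shows "mV \<phi> x = mV \<phi> y \<longleftrightarrow> (x, y) \<in> (adj (ghost X Y \<phi>))\<^sup>*"
  using assms
proof (induction arbitrary: x y rule: pure.induct)
  case (pure_id X)
  have "inv (ghost X X id_morph) f = f" for f
    by (simp add: ghost_def id_morph_def)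
  then have "adj (ghost X X id_morph) \<subseteq> {}\<^sup>*"
    by (auto simp: adj_eq_image)
  then have "(adj (ghost X X id_morph))\<^sup>* \<subseteq> Id"
    using rtrancl_subset_rtrancl by (metis rtrancl_empty)
  then show ?case by (auto simp: id_morph_def)
next
  case (pure_step X Y \<phi> s t Z \<psi>)
  let ?S = "(\<lambda>f. (bd X f, bd X (inv (ghost Y Z \<psi>) f))) ` flags Y"
  have vc: "aggregate X" "s \<in> flags X" "t \<in> flags X" "flags Y \<subseteq> flags X"
    "\<forall>x\<in>verts X. \<forall>y\<in>verts X. mV \<phi> x = mV \<phi> y \<longleftrightarrow> x = y \<or> {x, y} = {bd X s, bd X t}"
    "mV \<phi> ` verts X = verts Y"
    using pure_step.hyps(1) by (auto simp: virt_contr_def)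
  have bd_verts: "bd X f \<in> verts X" if "f \<in> flags X" for f
    using aggregate_bd_in_verts[OF vc(1) that] .
  have "?S \<subseteq> verts X \<times> verts X"
    using bd_verts vc(4) wf_graph_ghost[OF pure_step.hyps(2)] by (auto simp: wf_graph_def)
  note identify = rtrancl_map_prod_identify_pair[OF vc(5) bd_verts[OF vc(2)] bd_verts[OF vc(3)] this]
  have "mV (mcomp (flags Y) \<psi> \<phi>) x = mV (mcomp (flags Y) \<psi> \<phi>) y
      \<longleftrightarrow> mV \<psi> (mV \<phi> x) = mV \<psi> (mV \<phi> y)"
    by (simp add: mcomp_def)
  also have "\<dots> \<longleftrightarrow> (mV \<phi> x, mV \<phi> y) \<in> (adj (ghost Y Z \<psi>))\<^sup>*"
    using pure_step.IH pure_step.prems vc(6) by blast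
  also have "\<dots> \<longleftrightarrow> (x, y) \<in> (adj (ghost X Z (mcomp (flags Y) \<psi> \<phi>)))\<^sup>*"
    unfolding adj_ghost_virt_contr[OF pure_step.hyps] by (rule identify[OF pure_step.prems])
  finally show ?case .
qed

lemma component_ghost_pure:
  assumes "pure X Y \<phi>" and "v \<in> verts X"
  shows "component (ghost X Y \<phi>) v = {w \<in> verts X. mV \<phi> v = mV \<phi> w}"
  unfolding component_def ghost_simps
  by (rule Collect_cong) (use pure_mV_eq_iff_rtrancl_adj[OF assms] in blast)

lemma component_ghost_eq_iff:
  assumes "pure X Y \<phi>" and "x \<in> verts X" and "y \<in> verts X"
  shows "component (ghost X Y \<phi>) x = component (ghost X Y \<phi>) y \<longleftrightarrow> mV \<phi> x = mV \<phi> y"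
proof
  assume "component (ghost X Y \<phi>) x = component (ghost X Y \<phi>) y"
  moreover have "y \<in> component (ghost X Y \<phi>) y"
    using assms(3) by (simp add: component_ghost_pure[OF assms(1)])
  ultimately have "y \<in> component (ghost X Y \<phi>) x" by simp
  then show "mV \<phi> x = mV \<phi> y"
    by (simp add: component_ghost_pure[OF assms(1,2)])
qed (simp add: component_ghost_pure[OF assms(1,2)] component_ghost_pure[OF assms(1,3)])

lemma flags_tot_contr_ghost:
  assumes "pure X Y \<phi>"
  shows "flags (tot_contr (ghost X Y \<phi>)) = flags Y"
proof -
  have "flags (tot_contr (ghost X Y \<phi>)) = {f \<in> flags X. inv (ghost X Y \<phi>) f = f}"
    by (simp add: tot_contr_def)
  also have "\<dots> = flags X \<inter> flags Y"
    using ghost_inv_fixed_iff[OF assms] by blast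
  finally show ?thesis using pure_flags[OF assms] by blast
qed

lemma graph_eq_agg_ghost:
  assumes "aggregate X"
  shows "graph_eq X (agg (ghost X Y \<phi>))"
  using assms by (simp add: graph_eq_def agg_def aggregate_def)

lemma pure_factors_through_tot_contr:
  assumes P: "pure X Y \<phi>"
  defines "G \<equiv> ghost X Y \<phi>"
  shows "\<exists>\<psi> :: ('v set, 'v, 'f, 'f) morph. is_iso (tot_contr G) Y \<psi>
           \<and> morph_eq X Y \<phi> (mcomp (flags (tot_contr G)) \<psi> (v_morph G))"
proof -
  let ?g = "induced_map (component G) (verts X) (mV \<phi>)"
  let ?\<psi> = "\<lparr>mV = ?g, mF = id, mi = id\<rparr> :: ('v set, 'v, 'f, 'f) morph"
  have ker: "\<forall>x\<in>verts X. \<forall>y\<in>verts X. component G x = component G y \<longleftrightarrow> mV \<phi> x = mV \<phi> y"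
    unfolding G_def using component_ghost_eq_iff[OF P] by blast
  have flags_T: "flags (tot_contr G) = flags Y"
    unfolding G_def by (rule flags_tot_contr_ghost[OF P])
  have bd_verts: "bd X f \<in> verts X" if "f \<in> flags X" for f
    using aggregate_bd_in_verts[OF pure_aggregate(1)[OF P] that] .
  have "is_iso (tot_contr G) Y ?\<psi>"
  proof (rule aggregate_iso_of_vertex_bij)
    show "aggregate (tot_contr G)"
      unfolding G_def by (rule aggregate_tot_contr[OF wf_graph_ghost[OF P]])
    show "bij_betw ?g (verts (tot_contr G)) (verts Y)"
      using bij_betw_induced_map[OF ker] pure_verts[OF P] by (simp add: tot_contr_def G_def)
    show "\<forall>f\<in>flags (tot_contr G). ?g (bd (tot_contr G) f) = bd Y f"
      using flags_T pure_flags[OF P] bd_verts induced_map_apply[OF ker] pure_bd[OF P]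
      by (auto simp: tot_contr_def G_def)
  qed (use pure_aggregate(2)[OF P] flags_T in simp_all)
  moreover have "morph_eq X Y \<phi> (mcomp (flags (tot_contr G)) ?\<psi> (v_morph G))"
  proof (rule morph_eq_mcomp_vertex_map)
    show "\<forall>f\<in>flags X - flags (tot_contr G). mi (v_morph G) f = mi \<phi> f"
      using flags_T by (simp add: v_morph_simps G_def ghost_inv_pure[OF P])
  qed (use flags_T pure_flags[OF P] induced_map_apply[OF ker] in \<open>simp_all add: v_morph_simps\<close>)
  ultimately show ?thesis by blast
qed

lemma pure_unique_of_ghost:
  assumes P: "pure X Y \<phi>" and P': "pure X' Y' \<phi>'"
    and ghost_eq: "graph_eq (ghost X Y \<phi>) (ghost X' Y' \<phi>')"
  shows "\<exists>\<chi> :: ('v, 'v, 'f, 'f) morph. is_iso Y Y' \<chi> \<and> morph_eq X Y' \<phi>' (mcomp (flags Y) \<chi> \<phi>)"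
proof -
  have flags_X: "flags X' = flags X" and verts_X: "verts X' = verts X"
    and bd_X: "\<forall>f\<in>flags X. bd X' f = bd X f"
    and inv_eq: "\<forall>f\<in>flags X. inv (ghost X Y \<phi>) f = inv (ghost X' Y' \<phi>') f"
    using ghost_eq by (auto simp: graph_eq_def)
  have "f \<in> flags Y \<longleftrightarrow> f \<in> flags Y'" if "f \<in> flags X" for f
    using ghost_inv_fixed_iff[OF P that] ghost_inv_fixed_iff[OF P', of f] that flags_X inv_eq
    by simp
  moreover have "flags Y \<subseteq> flags X" "flags Y' \<subseteq> flags X"
    using pure_flags[OF P] pure_flags[OF P'] flags_X by auto
  ultimately have flags_Y: "flags Y' = flags Y" by blast
  have mi_eq: "mi \<phi>' f = mi \<phi> f" if "f \<in> flags X" "f \<notin> flags Y" for f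
    using inv_eq[rule_format, OF that(1)] that flags_Y
    by (simp add: ghost_inv_pure[OF P] ghost_inv_pure[OF P'])
  have ker: "\<forall>x\<in>verts X. \<forall>y\<in>verts X. mV \<phi> x = mV \<phi> y \<longleftrightarrow> mV \<phi>' x = mV \<phi>' y"
    using pure_mV_eq_iff_rtrancl_adj[OF P] pure_mV_eq_iff_rtrancl_adj[OF P'] verts_X
      adj_cong[OF wf_graph_ghost[OF P] ghost_eq]
    by simp
  let ?g = "induced_map (mV \<phi>) (verts X) (mV \<phi>')"
  let ?\<chi> = "\<lparr>mV = ?g, mF = id, mi = id\<rparr> :: ('v, 'v, 'f, 'f) morph"
  have bd_verts: "bd X f \<in> verts X" if "f \<in> flags X" for f
    using aggregate_bd_in_verts[OF pure_aggregate(1)[OF P] that] .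
  have "is_iso Y Y' ?\<chi>"
  proof (rule aggregate_iso_of_vertex_bij)
    show "bij_betw ?g (verts Y) (verts Y')"
      using bij_betw_induced_map[OF ker] pure_verts[OF P] pure_verts[OF P'] verts_X by simp
    show "\<forall>f\<in>flags Y. ?g (bd Y f) = bd Y' f"
      using pure_flags[OF P] bd_verts induced_map_apply[OF ker] pure_bd[OF P] pure_bd[OF P']
        flags_Y bd_X by auto
  qed (use pure_aggregate[OF P] pure_aggregate[OF P'] flags_Y in simp_all)
  moreover have "morph_eq X Y' \<phi>' (mcomp (flags Y) ?\<chi> \<phi>)"
    by (rule morph_eq_mcomp_vertex_map)
      (use flags_Y pure_flags[OF P] pure_flags[OF P'] induced_map_apply[OF ker] mi_eq in auto)
  ultimately show ?thesis by blast
qed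

theorem corollary2p10:
  fixes X Y :: "('f, 'v) graph" and \<phi> :: "('v, 'v, 'f, 'f) morph"
  assumes "pure X Y \<phi>"
  shows "graph_eq X (agg (ghost X Y \<phi>))
       \<and> (\<exists>\<psi> :: ('v set, 'v, 'f, 'f) morph.
            is_iso (tot_contr (ghost X Y \<phi>)) Y \<psi>
          \<and> morph_eq X Y \<phi> (mcomp (flags (tot_contr (ghost X Y \<phi>))) \<psi> (v_morph (ghost X Y \<phi>))))
       \<and> (\<forall>X' Y' (\<phi>' :: ('v, 'v, 'f, 'f) morph).
            pure X' Y' \<phi>' \<and> graph_eq (ghost X Y \<phi>) (ghost X' Y' \<phi>') \<longrightarrow>
            (\<exists>\<chi> :: ('v, 'v, 'f, 'f) morph. is_iso Y Y' \<chi> \<and> morph_eq X Y' \<phi>' (mcomp (flags Y) \<chi> \<phi>)))"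
  using graph_eq_agg_ghost[OF pure_aggregate(1)[OF assms]]
    pure_factors_through_tot_contr[OF assms] pure_unique_of_ghost[OF assms] by blast

end
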